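(* Let $\mathcal{J}\neq\emptyset$ be a countable set, $\{e_{j,k}:j\in\mathcal{J},k\in\mathbb{N}_0\}$ an orthonormal basis of $\mathcal{H}$, and $\{w_{j,k}\}\subseteq\mathbb{C}$ a bounded family. Define $B\in\mathcal{B}(\mathcal{H})$ by $Be_{j,0}=0$ and $Be_{j,k}=w_{j,k-1}e_{j,k-1}$ for $k\ge1$. Then: (i) if no weight is zero, $B$ is cyclic; (ii) if no weight is zero and there is $g\in\bigcap_{n\ge1}\operatorname{ran}(B^n)$ such that for each $j\in\mathcal{J}$ we have $\langle g,e_{j,k}\rangle\neq0$ for infinitely many $k$, then $B$ has a cyclic vector belonging to $\bigcap_{n\ge1}\operatorname{ran}(B^n)$; (iii) $B$ is cyclic if and only if at most one weight $w_{j,k}$ is zero.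
   Context: An operator $T$ is cyclic if there is $h$ (a cyclic vector) with $\bigvee\{T^nh:n\in\mathbb{N}_0\}=\mathcal{H}$. *)

theory Defs
  imports "HOL-Analysis.Analysis"
begin

text \<open>Concrete model of a separable Hilbert space with orthonormal basis
  indexed by J x N_0: the space l2(J x N_0) of square-summable complex families.
  The index set J is the (nonempty, countable) type 'j.\<close>

definition ell2 :: "('j \<times> nat \<Rightarrow> complex) set" where
  "ell2 = {x. (\<lambda>p. (cmod (x p))\<^sup>2) summable_on UNIV}"

definition l2norm :: "('j \<times> nat \<Rightarrow> complex) \<Rightarrow> real" where
  "l2norm x = sqrt (\<Sum>\<^sub>\<infinity>p. (cmod (x p))\<^sup>2)"

definition l2inner :: "('j \<times> nat \<Rightarrow> complex) \<Rightarrow> ('j \<times> nat \<Rightarrow> complex) \<Rightarrow> complex" where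
  "l2inner x y = (\<Sum>\<^sub>\<infinity>p. x p * cnj (y p))"

definition basis_vec :: "'j \<Rightarrow> nat \<Rightarrow> ('j \<times> nat \<Rightarrow> complex)" where
  "basis_vec j k = (\<lambda>p. if p = (j, k) then 1 else 0)"

text \<open>Weighted backward shift: B e_{j,0} = 0, B e_{j,k} = w_{j,k-1} e_{j,k-1},
  i.e. (Bx)_{j,k} = w_{j,k} x_{j,k+1}.\<close>
definition bshift :: "('j \<times> nat \<Rightarrow> complex) \<Rightarrow> ('j \<times> nat \<Rightarrow> complex) \<Rightarrow> ('j \<times> nat \<Rightarrow> complex)" where
  "bshift w x = (\<lambda>(j, k). w (j, k) * x (j, Suc k))"

definition cyclic_vector :: "(('j \<times> nat \<Rightarrow> complex) \<Rightarrow> ('j \<times> nat \<Rightarrow> complex)) \<Rightarrow> ('j \<times> nat \<Rightarrow> complex) \<Rightarrow> bool" where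
  "cyclic_vector T h \<longleftrightarrow> h \<in> ell2 \<and>
     (\<forall>x\<in>ell2. \<forall>\<epsilon>>0. \<exists>(c::nat \<Rightarrow> complex) N.
        l2norm (\<lambda>p. x p - (\<Sum>n<N. c n * (T ^^ n) h p)) < \<epsilon>)"

definition cyclic_op :: "(('j \<times> nat \<Rightarrow> complex) \<Rightarrow> ('j \<times> nat \<Rightarrow> complex)) \<Rightarrow> bool" where
  "cyclic_op T \<longleftrightarrow> (\<exists>h. cyclic_vector T h)"

definition op_range :: "(('j \<times> nat \<Rightarrow> complex) \<Rightarrow> ('j \<times> nat \<Rightarrow> complex)) \<Rightarrow> ('j \<times> nat \<Rightarrow> complex) set" where
  "op_range T = T ` ell2"

end

(*
  Suppose first that no weight vanishes. Put spikes of rapidly decreasing height a_m at the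
  positions (j_m, m^2 + K), where j_m runs through every column infinitely often. Rescaling
  B^(m^2 + K - k) h isolates e_(j_m, k): the spikes below node m are pushed out of the space,
  and the spikes above it are so small compared with the weights in between that they
  contribute an error of norm at most 1/(m+1). So every basis vector, hence all of l2, lies
  in the closed span of the orbit of h; a second decay condition puts h into the range of
  every power of B. A single zero weight w_(j0,k0) is handled by using h + e_(j0,k0) with
  K = k0 + 1: e_(j0,k0) is then recovered as a difference, and the remaining low basis vectors
  by shifting down along nonzero weights.

  Conversely, at a position p with w_p = 0 every B^n h with n >= 1 vanishes. On two such
  positions p and q every vector of the orbit span is therefore a multiple of (h_p, h_q), and
  such vectors cannot approximate both e_p and e_q.
*)

theory Submission
  imports Defs
begin

section \<open>Square-summable families\<close>

lemma l2norm_nonneg: "l2norm x \<ge> 0"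
  by (simp add: l2norm_def infsum_nonneg)

lemma l2norm_zero [simp]: "l2norm (\<lambda>p. 0) = 0"
  by (simp add: l2norm_def)

lemma l2norm_squared: "(l2norm x)\<^sup>2 = (\<Sum>\<^sub>\<infinity>p. (cmod (x p))\<^sup>2)"
  by (simp add: l2norm_def infsum_nonneg)

lemma sum_cmod_squared_le_l2norm:
  assumes "x \<in> ell2" "finite F"
  shows "(\<Sum>p\<in>F. (cmod (x p))\<^sup>2) \<le> (l2norm x)\<^sup>2"
  unfolding l2norm_squared
  by (rule finite_sum_le_infsum) (use assms in \<open>auto simp: ell2_def\<close>)

lemma ell2_if_finite_sums_bounded:
  assumes "\<And>F. finite F \<Longrightarrow> (\<Sum>p\<in>F. (cmod (x p))\<^sup>2) \<le> b"
  shows "x \<in> ell2"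
  unfolding ell2_def mem_Collect_eq
  by (rule nonneg_bdd_above_summable_on) (use assms in \<open>auto simp: bdd_above_def\<close>)

lemma ell2_l2norm_leI:
  assumes "\<And>F. finite F \<Longrightarrow> (\<Sum>p\<in>F. (cmod (x p))\<^sup>2) \<le> b\<^sup>2" and "b \<ge> 0"
  shows "x \<in> ell2" and "l2norm x \<le> b"
proof -
  show x: "x \<in> ell2" by (rule ell2_if_finite_sums_bounded[OF assms(1)])
  have "(\<Sum>\<^sub>\<infinity>p. (cmod (x p))\<^sup>2) \<le> b\<^sup>2"
    by (rule infsum_le_finite_sums) (use x assms(1) in \<open>auto simp: ell2_def\<close>)
  then show "l2norm x \<le> b"
    unfolding l2norm_def by (rule real_le_lsqrt[OF assms(2)])
qed

lemma cmod_le_l2norm: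
  assumes "x \<in> ell2"
  shows "cmod (x p) \<le> l2norm x"
proof (rule power2_le_imp_le)
  show "(cmod (x p))\<^sup>2 \<le> (l2norm x)\<^sup>2"
    using sum_cmod_squared_le_l2norm[OF assms, of "{p}"] by simp
qed (rule l2norm_nonneg)

lemma L2_set_le_l2norm:
  assumes "x \<in> ell2" "finite F"
  shows "L2_set (\<lambda>p. cmod (x p)) F \<le> l2norm x"
  unfolding L2_set_def l2norm_def
  by (intro real_sqrt_le_mono finite_sum_le_infsum) (use assms in \<open>auto simp: ell2_def\<close>)

lemma ell2_add:
  assumes "x \<in> ell2" "y \<in> ell2"
  shows "(\<lambda>p. x p + y p) \<in> ell2" and "l2norm (\<lambda>p. x p + y p) \<le> l2norm x + l2norm y"
proof -
  have bound: "(\<Sum>p\<in>F. (cmod (x p + y p))\<^sup>2) \<le> (l2norm x + l2norm y)\<^sup>2" if F: "finite F" for F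
  proof -
    have "L2_set (\<lambda>p. cmod (x p + y p)) F \<le> L2_set (\<lambda>p. cmod (x p) + cmod (y p)) F"
      by (rule L2_set_mono) (auto simp: norm_triangle_ineq)
    also have "\<dots> \<le> L2_set (\<lambda>p. cmod (x p)) F + L2_set (\<lambda>p. cmod (y p)) F"
      by (rule L2_set_triangle_ineq)
    also have "\<dots> \<le> l2norm x + l2norm y"
      using assms F by (intro add_mono L2_set_le_l2norm)
    finally have "(L2_set (\<lambda>p. cmod (x p + y p)) F)\<^sup>2 \<le> (l2norm x + l2norm y)\<^sup>2"
      by (simp add: L2_set_nonneg power_mono)
    then show ?thesis by (simp add: L2_set_def sum_nonneg)
  qed
  have nonneg: "l2norm x + l2norm y \<ge> 0" by (simp add: l2norm_nonneg)
  show "(\<lambda>p. x p + y p) \<in> ell2" "l2norm (\<lambda>p. x p + y p) \<le> l2norm x + l2norm y"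
    using ell2_l2norm_leI[OF bound nonneg] by simp_all
qed

lemma ell2_scale:
  assumes "x \<in> ell2"
  shows "(\<lambda>p. c * x p) \<in> ell2" and "l2norm (\<lambda>p. c * x p) \<le> cmod c * l2norm x"
proof -
  have bound: "(\<Sum>p\<in>F. (cmod (c * x p))\<^sup>2) \<le> (cmod c * l2norm x)\<^sup>2" if "finite F" for F
    using mult_left_mono[OF sum_cmod_squared_le_l2norm[OF assms that], of "(cmod c)\<^sup>2"]
    by (simp add: norm_mult power_mult_distrib sum_distrib_left)
  have nonneg: "cmod c * l2norm x \<ge> 0" by (simp add: l2norm_nonneg)
  show "(\<lambda>p. c * x p) \<in> ell2" "l2norm (\<lambda>p. c * x p) \<le> cmod c * l2norm x"
    using ell2_l2norm_leI[OF bound nonneg] by simp_all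
qed

lemma ell2_diff:
  assumes "x \<in> ell2" "y \<in> ell2"
  shows "(\<lambda>p. x p - y p) \<in> ell2"
  using ell2_add(1)[OF assms(1) ell2_scale(1)[OF assms(2), of "-1"]] by simp

lemma l2norm_diff_triangle:
  assumes "x \<in> ell2" "y \<in> ell2" "z \<in> ell2"
  shows "l2norm (\<lambda>p. x p - z p) \<le> l2norm (\<lambda>p. x p - y p) + l2norm (\<lambda>p. y p - z p)"
  using ell2_add(2)[OF ell2_diff[OF assms(1,2)] ell2_diff[OF assms(2,3)]] by simp

lemma ell2_finite_support:
  assumes "finite {p. x p \<noteq> 0}"
  shows "x \<in> ell2"
proof (rule ell2_if_finite_sums_bounded)
  fix F :: "('a \<times> nat) set" assume F: "finite F"
  have "(\<Sum>p\<in>F. (cmod (x p))\<^sup>2) = (\<Sum>p\<in>F \<inter> {p. x p \<noteq> 0}. (cmod (x p))\<^sup>2)"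
    by (rule sum.mono_neutral_right) (use F in auto)
  also have "\<dots> \<le> (\<Sum>p\<in>{p. x p \<noteq> 0}. (cmod (x p))\<^sup>2)"
    by (rule sum_mono2[OF assms]) auto
  finally show "(\<Sum>p\<in>F. (cmod (x p))\<^sup>2) \<le> (\<Sum>p\<in>{p. x p \<noteq> 0}. (cmod (x p))\<^sup>2)" .
qed

lemma zero_ell2 [simp]: "(\<lambda>p. 0) \<in> ell2"
  by (rule ell2_finite_support) simp

lemma basis_vec_ell2 [simp]: "basis_vec j k \<in> ell2"
  by (rule ell2_finite_support) (simp add: basis_vec_def)

lemma ell2_tail_small:
  assumes x: "x \<in> ell2" and e: "\<epsilon> > 0"
  obtains F where "finite F" "l2norm (\<lambda>p. if p \<in> F then 0 else x p) < \<epsilon>"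
proof -
  have s: "(\<lambda>p. (cmod (x p))\<^sup>2) summable_on UNIV" using x by (simp add: ell2_def)
  obtain F where F: "finite F" "dist (\<Sum>p\<in>F. (cmod (x p))\<^sup>2) ((l2norm x)\<^sup>2) \<le> \<epsilon>\<^sup>2/2"
    using infsum_finite_approximation[OF s, of "\<epsilon>\<^sup>2/2"] e unfolding l2norm_squared by auto
  have "(\<Sum>p\<in>G. (cmod (if p \<in> F then 0 else x p))\<^sup>2) \<le> (sqrt (\<epsilon>\<^sup>2/2))\<^sup>2" if G: "finite G" for G
  proof -
    have "(\<Sum>p\<in>G. (cmod (if p \<in> F then 0 else x p))\<^sup>2) = (\<Sum>p\<in>G - F. (cmod (x p))\<^sup>2)"
      by (rule sum.mono_neutral_cong_right) (use G in auto)
    also have "\<dots> = (\<Sum>p\<in>(G - F) \<union> F. (cmod (x p))\<^sup>2) - (\<Sum>p\<in>F. (cmod (x p))\<^sup>2)"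
      by (subst sum.union_disjoint) (use G F in auto)
    also have "\<dots> \<le> \<epsilon>\<^sup>2/2"
      using sum_cmod_squared_le_l2norm[OF x, of "(G - F) \<union> F"] G F F(2)
      unfolding dist_real_def abs_diff_le_iff by simp
    also have "\<dots> = (sqrt (\<epsilon>\<^sup>2/2))\<^sup>2" by simp
    finally show ?thesis .
  qed
  then have "l2norm (\<lambda>p. if p \<in> F then 0 else x p) \<le> sqrt (\<epsilon>\<^sup>2/2)"
    by (rule ell2_l2norm_leI(2)) (auto intro: real_sqrt_ge_zero)
  also have "\<dots> < sqrt (\<epsilon>\<^sup>2)"
    using e by (intro real_sqrt_less_mono) simp
  also have "\<dots> = \<epsilon>"
    using e by simp
  finally show ?thesis using F(1) by (rule that[rotated])
qed

section \<open>Cyclic subspaces of bounded operators\<close>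

definition orbit_span ::
    "(('j \<times> nat \<Rightarrow> complex) \<Rightarrow> ('j \<times> nat \<Rightarrow> complex)) \<Rightarrow> ('j \<times> nat \<Rightarrow> complex)
      \<Rightarrow> ('j \<times> nat \<Rightarrow> complex) set"
  where "orbit_span T h = {y. \<exists>c N. y = (\<lambda>p. \<Sum>n<N. c n * (T ^^ n) h p)}"

definition cyclic_closure ::
    "(('j \<times> nat \<Rightarrow> complex) \<Rightarrow> ('j \<times> nat \<Rightarrow> complex)) \<Rightarrow> ('j \<times> nat \<Rightarrow> complex)
      \<Rightarrow> ('j \<times> nat \<Rightarrow> complex) set"
  where "cyclic_closure T h =
    {x \<in> ell2. \<forall>\<epsilon>>0. \<exists>y\<in>orbit_span T h. l2norm (\<lambda>p. x p - y p) < \<epsilon>}"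

lemma cyclic_closure_ell2: "x \<in> cyclic_closure T h \<Longrightarrow> x \<in> ell2"
  by (simp add: cyclic_closure_def)

lemma cyclic_closure_approx:
  assumes "x \<in> cyclic_closure T h" "\<epsilon> > 0"
  obtains y where "y \<in> orbit_span T h" "l2norm (\<lambda>p. x p - y p) < \<epsilon>"
  using assms by (auto simp: cyclic_closure_def)

lemma orbit_spanI: "(\<lambda>p. \<Sum>n<N. c n * (T ^^ n) h p) \<in> orbit_span T h"
  unfolding orbit_span_def by blast

lemma bex_orbit_span:
  "(\<exists>y\<in>orbit_span T h. P y) \<longleftrightarrow> (\<exists>c N. P (\<lambda>p. \<Sum>n<N. c n * (T ^^ n) h p))"
  unfolding orbit_span_def by blast

lemma cyclic_vector_iff_cyclic_closure:
  "cyclic_vector T h \<longleftrightarrow> h \<in> ell2 \<and> ell2 \<subseteq> cyclic_closure T h"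
  unfolding cyclic_vector_def cyclic_closure_def bex_orbit_span by blast

lemma orbit_span_power: "(T ^^ m) h \<in> orbit_span T h"
  unfolding orbit_span_def
  by (auto intro!: exI[of _ "\<lambda>n. if n = m then 1 else 0"] exI[of _ "Suc m"]
      simp: if_distrib cong: if_cong)

lemma orbit_span_zero: "(\<lambda>p. 0) \<in> orbit_span T h"
  unfolding orbit_span_def by (auto intro!: exI[of _ 0])

lemma orbit_span_scale:
  assumes "y \<in> orbit_span T h"
  shows "(\<lambda>p. a * y p) \<in> orbit_span T h"
proof -
  obtain c N where "y = (\<lambda>p. \<Sum>n<N. c n * (T ^^ n) h p)"
    using assms by (auto simp: orbit_span_def)
  then have "(\<lambda>p. a * y p) = (\<lambda>p. \<Sum>n<N. (a * c n) * (T ^^ n) h p)"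
    by (simp add: sum_distrib_left mult.assoc)
  then show ?thesis by (simp add: orbit_spanI)
qed

lemma orbit_span_add:
  assumes "y \<in> orbit_span T h" "z \<in> orbit_span T h"
  shows "(\<lambda>p. y p + z p) \<in> orbit_span T h"
proof -
  obtain c N where y: "y = (\<lambda>p. \<Sum>n<N. c n * (T ^^ n) h p)"
    using assms by (auto simp: orbit_span_def)
  obtain d L where z: "z = (\<lambda>p. \<Sum>n<L. d n * (T ^^ n) h p)"
    using assms by (auto simp: orbit_span_def)
  let ?c = "\<lambda>n. if n < N then c n else 0" and ?d = "\<lambda>n. if n < L then d n else 0"
  have "y p = (\<Sum>n<max N L. ?c n * (T ^^ n) h p)" for p
    unfolding y by (rule sum.mono_neutral_cong_left) auto
  moreover have "z p = (\<Sum>n<max N L. ?d n * (T ^^ n) h p)" for p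
    unfolding z by (rule sum.mono_neutral_cong_left) auto
  ultimately have "(\<lambda>p. y p + z p) = (\<lambda>p. \<Sum>n<max N L. (?c n + ?d n) * (T ^^ n) h p)"
    by (simp add: distrib_right sum.distrib)
  then show ?thesis by (simp add: orbit_spanI)
qed

locale bounded_l2_operator =
  fixes T :: "('j \<times> nat \<Rightarrow> complex) \<Rightarrow> ('j \<times> nat \<Rightarrow> complex)" and M :: real
  assumes linear: "T (\<lambda>p. a * x p + y p) = (\<lambda>p. a * T x p + T y p)"
    and maps_ell2: "x \<in> ell2 \<Longrightarrow> T x \<in> ell2"
    and l2norm_le: "x \<in> ell2 \<Longrightarrow> l2norm (T x) \<le> M * l2norm x"
begin

lemma zero: "T (\<lambda>p. 0) = (\<lambda>p. 0)"
  using linear[of "-1" "\<lambda>p. 0" "\<lambda>p. 0"] by simp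

lemma scale: "T (\<lambda>p. a * x p) = (\<lambda>p. a * T x p)"
  using linear[of a x "\<lambda>p. 0"] by (simp add: zero)

lemma add: "T (\<lambda>p. x p + y p) = (\<lambda>p. T x p + T y p)"
  using linear[of 1 x y] by simp

lemma diff: "T (\<lambda>p. x p - y p) = (\<lambda>p. T x p - T y p)"
  using linear[of "-1" y x] by (simp add: algebra_simps)

lemma sum: "T (\<lambda>p. \<Sum>n\<in>A. f n p) = (\<lambda>p. \<Sum>n\<in>A. T (f n) p)"
proof (induction A rule: infinite_finite_induct)
  case (insert n A)
  then show ?case using add[of "f n" "\<lambda>p. \<Sum>n\<in>A. f n p"] by simp
qed (simp_all add: zero)

lemma orbit_span_apply:
  assumes "y \<in> orbit_span T h"
  shows "T y \<in> orbit_span T h"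
proof -
  obtain c N where y: "y = (\<lambda>p. \<Sum>n<N. c n * (T ^^ n) h p)"
    using assms by (auto simp: orbit_span_def)
  let ?c = "\<lambda>n. if n = 0 then 0 else c (n - 1)"
  have "T y = (\<lambda>p. \<Sum>n<N. c n * (T ^^ Suc n) h p)"
    unfolding y sum by (simp add: scale)
  also have "\<dots> = (\<lambda>p. \<Sum>n<Suc N. ?c n * (T ^^ n) h p)"
    by (simp add: sum.lessThan_Suc_shift del: sum.lessThan_Suc)
  finally show ?thesis by (simp only: orbit_spanI)
qed

lemma power_ell2: "x \<in> ell2 \<Longrightarrow> (T ^^ n) x \<in> ell2"
  by (induction n) (auto intro: maps_ell2)

lemma orbit_span_subset_ell2:
  assumes "h \<in> ell2"
  shows "orbit_span T h \<subseteq> ell2"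
proof
  fix y assume "y \<in> orbit_span T h"
  then obtain c N where y: "y = (\<lambda>p. \<Sum>n<N. c n * (T ^^ n) h p)"
    by (auto simp: orbit_span_def)
  have "(\<lambda>p. \<Sum>n<N. c n * (T ^^ n) h p) \<in> ell2"
  proof (induction N)
    case (Suc N)
    from ell2_add(1)[OF Suc ell2_scale(1)[OF power_ell2[OF assms]]] show ?case by simp
  qed simp
  then show "y \<in> ell2" by (simp add: y)
qed

context
  fixes h :: "'j \<times> nat \<Rightarrow> complex" assumes h: "h \<in> ell2"
begin

lemma orbit_span_subset_cyclic_closure: "orbit_span T h \<subseteq> cyclic_closure T h"
proof
  fix y assume "y \<in> orbit_span T h"
  moreover have "l2norm (\<lambda>p. y p - y p) = 0" by simp
  ultimately show "y \<in> cyclic_closure T h"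
    using orbit_span_subset_ell2[OF h] by (force simp: cyclic_closure_def)
qed

lemma cyclic_closure_closed:
  assumes x: "x \<in> ell2" and near: "\<And>\<epsilon>. \<epsilon> > 0 \<Longrightarrow> \<exists>z\<in>cyclic_closure T h. l2norm (\<lambda>p. x p - z p) < \<epsilon>"
  shows "x \<in> cyclic_closure T h"
proof -
  have "\<exists>y\<in>orbit_span T h. l2norm (\<lambda>p. x p - y p) < \<epsilon>" if e: "\<epsilon> > 0" for \<epsilon>
  proof -
    obtain z where z: "z \<in> cyclic_closure T h" "l2norm (\<lambda>p. x p - z p) < \<epsilon>/2"
      using near[of "\<epsilon>/2"] e by auto
    obtain y where y: "y \<in> orbit_span T h" "l2norm (\<lambda>p. z p - y p) < \<epsilon>/2"
      by (rule cyclic_closure_approx[OF z(1) half_gt_zero[OF e]])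
    have "l2norm (\<lambda>p. x p - y p) \<le> l2norm (\<lambda>p. x p - z p) + l2norm (\<lambda>p. z p - y p)"
      using x z(1) y(1) orbit_span_subset_ell2[OF h]
      by (intro l2norm_diff_triangle) (auto intro: cyclic_closure_ell2)
    with y z have "l2norm (\<lambda>p. x p - y p) < \<epsilon>" by simp
    then show ?thesis using y(1) by (rule bexI)
  qed
  with x show ?thesis by (simp add: cyclic_closure_def)
qed

lemma cyclic_closure_add:
  assumes x: "x \<in> cyclic_closure T h" and z: "z \<in> cyclic_closure T h"
  shows "(\<lambda>p. x p + z p) \<in> cyclic_closure T h"
proof -
  have xz: "x \<in> ell2" "z \<in> ell2" using x z by (auto intro: cyclic_closure_ell2)
  have "\<exists>y\<in>orbit_span T h. l2norm (\<lambda>p. x p + z p - y p) < \<epsilon>" if e: "\<epsilon> > 0" for \<epsilon>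
  proof -
    obtain y1 where y1: "y1 \<in> orbit_span T h" "l2norm (\<lambda>p. x p - y1 p) < \<epsilon>/2"
      by (rule cyclic_closure_approx[OF x half_gt_zero[OF e]])
    obtain y2 where y2: "y2 \<in> orbit_span T h" "l2norm (\<lambda>p. z p - y2 p) < \<epsilon>/2"
      by (rule cyclic_closure_approx[OF z half_gt_zero[OF e]])
    have "(\<lambda>p. x p - y1 p) \<in> ell2" "(\<lambda>p. z p - y2 p) \<in> ell2"
      using xz y1 y2 orbit_span_subset_ell2[OF h] by (auto intro: ell2_diff)
    from ell2_add(2)[OF this]
    have "l2norm (\<lambda>p. x p + z p - (y1 p + y2 p)) < \<epsilon>"
      using y1 y2 by (simp add: algebra_simps)
    then show ?thesis using orbit_span_add[OF y1(1) y2(1)] by (rule bexI)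
  qed
  with ell2_add(1)[OF xz] show ?thesis by (simp add: cyclic_closure_def)
qed

lemma cyclic_closure_image:
  assumes L_ell2: "\<And>x. x \<in> ell2 \<Longrightarrow> L x \<in> ell2"
    and L_orbit: "\<And>y. y \<in> orbit_span T h \<Longrightarrow> L y \<in> orbit_span T h"
    and L_lipschitz: "\<And>x y. x \<in> ell2 \<Longrightarrow> y \<in> ell2 \<Longrightarrow>
      l2norm (\<lambda>p. L x p - L y p) \<le> C * l2norm (\<lambda>p. x p - y p)"
    and x: "x \<in> cyclic_closure T h"
  shows "L x \<in> cyclic_closure T h"
proof -
  have "\<exists>y\<in>orbit_span T h. l2norm (\<lambda>p. L x p - y p) < \<epsilon>" if e: "\<epsilon> > 0" for \<epsilon>
  proof -
    have C: "\<bar>C\<bar> + 1 > 0" by simp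
    obtain y where y: "y \<in> orbit_span T h" "l2norm (\<lambda>p. x p - y p) < \<epsilon> / (\<bar>C\<bar> + 1)"
      by (rule cyclic_closure_approx[OF x divide_pos_pos[OF e C]])
    have "y \<in> ell2" using y(1) orbit_span_subset_ell2[OF h] by blast
    then have "l2norm (\<lambda>p. L x p - L y p) \<le> C * l2norm (\<lambda>p. x p - y p)"
      using x by (intro L_lipschitz) (auto intro: cyclic_closure_ell2)
    also have "\<dots> \<le> (\<bar>C\<bar> + 1) * l2norm (\<lambda>p. x p - y p)"
      by (intro mult_right_mono) (auto simp: l2norm_nonneg)
    also have "\<dots> < \<epsilon>"
      using y(2) C by (simp add: field_simps)
    finally show ?thesis using L_orbit[OF y(1)] by (rule bexI)
  qed
  with x L_ell2 cyclic_closure_ell2 show ?thesis by (simp add: cyclic_closure_def)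
qed

lemma cyclic_closure_scale:
  assumes "x \<in> cyclic_closure T h"
  shows "(\<lambda>p. a * x p) \<in> cyclic_closure T h"
proof (rule cyclic_closure_image[where L = "\<lambda>x p. a * x p" and C = "cmod a", OF _ _ _ assms])
  fix x y :: "'j \<times> nat \<Rightarrow> complex" assume "x \<in> ell2" "y \<in> ell2"
  from ell2_scale(2)[OF ell2_diff[OF this], of a]
  show "l2norm (\<lambda>p. a * x p - a * y p) \<le> cmod a * l2norm (\<lambda>p. x p - y p)"
    by (simp add: algebra_simps)
qed (auto intro: ell2_scale orbit_span_scale)

lemma cyclic_closure_apply:
  assumes "x \<in> cyclic_closure T h"
  shows "T x \<in> cyclic_closure T h"
proof (rule cyclic_closure_image[where C = M, OF _ _ _ assms])
  fix x y :: "'j \<times> nat \<Rightarrow> complex" assume "x \<in> ell2" "y \<in> ell2"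
  from l2norm_le[OF ell2_diff[OF this]]
  show "l2norm (\<lambda>p. T x p - T y p) \<le> M * l2norm (\<lambda>p. x p - y p)"
    by (simp add: diff)
qed (auto intro: maps_ell2 orbit_span_apply)

lemma cyclic_closure_power:
  "x \<in> cyclic_closure T h \<Longrightarrow> (T ^^ n) x \<in> cyclic_closure T h"
  by (induction n) (auto intro: cyclic_closure_apply)

lemma cyclic_closure_diff:
  assumes "x \<in> cyclic_closure T h" "z \<in> cyclic_closure T h"
  shows "(\<lambda>p. x p - z p) \<in> cyclic_closure T h"
  using cyclic_closure_add[OF assms(1) cyclic_closure_scale[OF assms(2), of "-1"]] by simp

lemma cyclic_closure_sum:
  assumes "finite A" "\<And>i. i \<in> A \<Longrightarrow> f i \<in> cyclic_closure T h"
  shows "(\<lambda>p. \<Sum>i\<in>A. f i p) \<in> cyclic_closure T h"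
  using assms
proof (induction A rule: finite_induct)
  case empty
  then show ?case using orbit_span_zero orbit_span_subset_cyclic_closure by auto
next
  case (insert i A)
  then show ?case using cyclic_closure_add[of "f i" "\<lambda>p. \<Sum>i\<in>A. f i p"] by simp
qed

text \<open>Finitely supported vectors are dense in \<open>ell2\<close>, so it suffices to reach the
  basis vectors that occur in \<open>x\<close>.\<close>

lemma cyclic_closure_if_basis_vecs:
  assumes x: "x \<in> ell2"
    and basis: "\<And>j k. x (j, k) \<noteq> 0 \<Longrightarrow> basis_vec j k \<in> cyclic_closure T h"
  shows "x \<in> cyclic_closure T h"
proof (rule cyclic_closure_closed[OF x])
  fix \<epsilon> :: real assume "\<epsilon> > 0"
  with x obtain F where F: "finite F" "l2norm (\<lambda>p. if p \<in> F then 0 else x p) < \<epsilon>"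
    by (rule ell2_tail_small)
  define z where "z = (\<lambda>p. \<Sum>(j, k)\<in>F \<inter> {p. x p \<noteq> 0}. x (j, k) * basis_vec j k p)"
  have "(\<lambda>p. x p - z p) = (\<lambda>p. if p \<in> F then 0 else x p)"
    using F(1) by (auto simp: z_def basis_vec_def split_def if_distrib cong: if_cong)
  with F(2) have "l2norm (\<lambda>p. x p - z p) < \<epsilon>" by simp
  moreover have "z \<in> cyclic_closure T h"
    unfolding z_def split_def using F(1)
    by (intro cyclic_closure_sum cyclic_closure_scale basis) auto
  ultimately show "\<exists>z\<in>cyclic_closure T h. l2norm (\<lambda>p. x p - z p) < \<epsilon>"
    by (rule bexI)
qed

lemma cyclic_vector_if_basis_vecs:
  assumes "\<And>j k. basis_vec j k \<in> cyclic_closure T h"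
  shows "cyclic_vector T h"
  using h assms cyclic_closure_if_basis_vecs by (auto simp: cyclic_vector_iff_cyclic_closure)

end

end

section \<open>Weighted backward shifts\<close>

definition weight_prod :: "('j \<times> nat \<Rightarrow> complex) \<Rightarrow> 'j \<Rightarrow> nat \<Rightarrow> nat \<Rightarrow> complex" where
  "weight_prod w j k s = (\<Prod>i<s. w (j, k + i))"

lemma weight_prod_Suc: "weight_prod w j k (Suc s) = w (j, k) * weight_prod w j (Suc k) s"
  unfolding weight_prod_def by (simp add: prod.lessThan_Suc_shift del: prod.lessThan_Suc)

lemma weight_prod_atLeastLessThan: "weight_prod w j k s = (\<Prod>i\<in>{k..<k + s}. w (j, i))"
proof -
  have "{k..<k + s} = (\<lambda>i. k + i) ` {..<s}"
    by (simp add: lessThan_atLeast0 add.commute)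
  then show ?thesis
    by (simp add: weight_prod_def prod.reindex inj_on_def)
qed

lemma weight_prod_nonzero:
  "(\<And>i. k \<le> i \<Longrightarrow> i < k + s \<Longrightarrow> w (j, i) \<noteq> 0) \<Longrightarrow> weight_prod w j k s \<noteq> 0"
  unfolding weight_prod_def by (auto simp: prod_zero_iff)

lemma weight_prod_eq_0: "w (j, k) = 0 \<Longrightarrow> 0 < s \<Longrightarrow> weight_prod w j k s = 0"
  unfolding weight_prod_def by (rule prod_zero) (auto intro: bexI[of _ 0])

lemma cmod_weight_prod_le:
  assumes "\<forall>p. cmod (w p) \<le> M"
  shows "cmod (weight_prod w j k s) \<le> M ^ s"
  using prod_mono[of "{..<s}" "\<lambda>i. cmod (w (j, k + i))" "\<lambda>i. M"] assms
  by (simp add: weight_prod_def prod_norm)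

text \<open>Capping at 1 makes this a lower bound for every weight product inside the
  segment \<open>[a, b)\<close> of column \<open>j\<close>.\<close>

definition weight_floor :: "('j \<times> nat \<Rightarrow> complex) \<Rightarrow> 'j \<Rightarrow> nat \<Rightarrow> nat \<Rightarrow> real" where
  "weight_floor w j a b = (\<Prod>i\<in>{a..<b}. min 1 (cmod (w (j, i))))"

lemma weight_floor_pos:
  "(\<And>i. a \<le> i \<Longrightarrow> i < b \<Longrightarrow> w (j, i) \<noteq> 0) \<Longrightarrow> weight_floor w j a b > 0"
  unfolding weight_floor_def by (rule prod_pos) auto

lemma weight_floor_le_weight_prod:
  assumes "a \<le> k" "k + s \<le> b"
  shows "weight_floor w j a b \<le> cmod (weight_prod w j k s)"
proof -
  let ?f = "\<lambda>i. min 1 (cmod (w (j, i)))"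
  have "{a..<b} = {k..<k + s} \<union> ({a..<b} - {k..<k + s})" using assms by auto
  then have "weight_floor w j a b = prod ?f {k..<k + s} * prod ?f ({a..<b} - {k..<k + s})"
    unfolding weight_floor_def by (metis finite_Diff finite_atLeastLessThan prod.union_disjoint Diff_disjoint)
  also have "\<dots> \<le> prod ?f {k..<k + s}"
    by (intro mult_left_le prod_le_1 prod_nonneg) auto
  also have "\<dots> \<le> (\<Prod>i\<in>{k..<k + s}. cmod (w (j, i)))"
    by (intro prod_mono) auto
  finally show ?thesis
    by (simp add: weight_prod_atLeastLessThan prod_norm)
qed

lemma bshift_power: "(bshift w ^^ s) x (j, k) = weight_prod w j k s * x (j, k + s)"
proof (induction s arbitrary: k)
  case 0
  show ?case by (simp add: weight_prod_def)
next
  case (Suc s)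
  then show ?case by (simp add: bshift_def weight_prod_Suc)
qed

lemma bshift_power_basis_vec:
  "(bshift w ^^ s) (basis_vec j (k + s)) = (\<lambda>p. weight_prod w j k s * basis_vec j k p)"
  by (auto simp: bshift_power basis_vec_def)

lemma bshift_bounded_l2_operator:
  fixes w :: "'j \<times> nat \<Rightarrow> complex"
  assumes M: "\<forall>p. cmod (w p) \<le> M"
  shows "bounded_l2_operator (bshift w) M"
proof
  fix x :: "'j \<times> nat \<Rightarrow> complex" assume x: "x \<in> ell2"
  have M0: "M \<ge> 0" using M norm_ge_zero order_trans by blast
  have "(\<Sum>p\<in>F. (cmod (bshift w x p))\<^sup>2) \<le> (M * l2norm x)\<^sup>2" if F: "finite F" for F
  proof -
    define \<sigma> where "\<sigma> = (\<lambda>(j :: 'j, k). (j, Suc k))"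
    have "(\<Sum>p\<in>F. (cmod (bshift w x p))\<^sup>2) \<le> (\<Sum>p\<in>F. M\<^sup>2 * (cmod (x (\<sigma> p)))\<^sup>2)"
    proof (rule sum_mono)
      fix p :: "'j \<times> nat"
      have "cmod (bshift w x p) \<le> M * cmod (x (\<sigma> p))"
        using M by (auto simp: bshift_def \<sigma>_def norm_mult split: prod.split intro!: mult_right_mono)
      then show "(cmod (bshift w x p))\<^sup>2 \<le> M\<^sup>2 * (cmod (x (\<sigma> p)))\<^sup>2"
        by (metis norm_ge_zero power_mono power_mult_distrib)
    qed
    also have "\<dots> = M\<^sup>2 * (\<Sum>p\<in>\<sigma> ` F. (cmod (x p))\<^sup>2)"
      by (simp add: sum_distrib_left sum.reindex inj_on_def \<sigma>_def split: prod.splits)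
    also have "\<dots> \<le> M\<^sup>2 * (l2norm x)\<^sup>2"
      using F by (intro mult_left_mono sum_cmod_squared_le_l2norm[OF x]) auto
    finally show ?thesis by (simp add: power_mult_distrib)
  qed
  moreover have "M * l2norm x \<ge> 0" using M0 by (simp add: l2norm_nonneg)
  ultimately show "bshift w x \<in> ell2" "l2norm (bshift w x) \<le> M * l2norm x"
    using ell2_l2norm_leI[of "bshift w x" "M * l2norm x"] by auto
qed (auto simp: bshift_def algebra_simps)

lemma basis_vec_in_cyclic_closure_descend:
  assumes M: "\<forall>p. cmod (w p) \<le> M" and h: "h \<in> ell2"
    and up: "basis_vec j (k + s) \<in> cyclic_closure (bshift w) h"
    and nonzero: "weight_prod w j k s \<noteq> 0"
  shows "basis_vec j k \<in> cyclic_closure (bshift w) h"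
proof -
  interpret bounded_l2_operator "bshift w" M by (rule bshift_bounded_l2_operator[OF M])
  have "(\<lambda>p. weight_prod w j k s * basis_vec j k p) \<in> cyclic_closure (bshift w) h"
    using cyclic_closure_power[OF h up, of s] by (simp add: bshift_power_basis_vec)
  from cyclic_closure_scale[OF h this, of "inverse (weight_prod w j k s)"]
  show ?thesis using nonzero by (simp add: field_simps)
qed

section \<open>Two zero weights prevent cyclicity\<close>

text \<open>At a position where the weight vanishes, every \<open>B\<^sup>n h\<close> with \<open>n \<ge> 1\<close> vanishes, so
  the orbit span sees \<open>h\<close> there only through the coefficient of \<open>B\<^sup>0\<close>.\<close>

lemma orbit_span_at_zero_weights:
  assumes "y \<in> orbit_span (bshift w) h"
  obtains d where "\<And>p. w p = 0 \<Longrightarrow> y p = d * h p"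
proof -
  obtain c N where y: "y = (\<lambda>p. \<Sum>n<N. c n * (bshift w ^^ n) h p)"
    using assms by (auto simp: orbit_span_def)
  have "y p = (if 0 < N then c 0 else 0) * h p" if "w p = 0" for p
  proof -
    obtain j k where p: "p = (j, k)" by fastforce
    have "(bshift w ^^ n) h p = 0" if "0 < n" for n
      using weight_prod_eq_0[of w j k n] \<open>w p = 0\<close> that by (simp add: p bshift_power)
    then have "y p = (\<Sum>n\<in>{0} \<inter> {..<N}. c n * (bshift w ^^ n) h p)"
      unfolding y by (intro sum.mono_neutral_right) auto
    then show ?thesis by (cases N) auto
  qed
  then show ?thesis by (rule that)
qed

lemma cyclic_closure_at_zero_weights:
  assumes M: "\<forall>p. cmod (w p) \<le> M" and h: "h \<in> ell2"
    and x: "x \<in> cyclic_closure (bshift w) h" and "\<epsilon> > 0"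
  obtains d where "\<And>p. w p = 0 \<Longrightarrow> cmod (x p - d * h p) < \<epsilon>"
proof -
  interpret bounded_l2_operator "bshift w" M by (rule bshift_bounded_l2_operator[OF M])
  obtain y where y: "y \<in> orbit_span (bshift w) h" "l2norm (\<lambda>p. x p - y p) < \<epsilon>"
    using x \<open>\<epsilon> > 0\<close> by (rule cyclic_closure_approx)
  obtain d where d: "\<And>p. w p = 0 \<Longrightarrow> y p = d * h p"
    using orbit_span_at_zero_weights[OF y(1)] by metis
  have "(\<lambda>p. x p - y p) \<in> ell2"
    using x y(1) orbit_span_subset_ell2[OF h] by (auto intro: ell2_diff cyclic_closure_ell2)
  with y(2) d have "cmod (x p - d * h p) < \<epsilon>" if "w p = 0" for p
    using cmod_le_l2norm[of "\<lambda>p. x p - y p" p] that by fastforce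
  then show ?thesis by (rule that)
qed

lemma at_most_one_zero_weight_if_cyclic:
  assumes M: "\<forall>p. cmod (w p) \<le> M" and cyclic: "cyclic_op (bshift w)"
    and zeros: "w p = 0" "w q = 0"
  shows "p = q"
proof (rule ccontr)
  assume pq: "p \<noteq> q"
  obtain h where h: "h \<in> ell2" "ell2 \<subseteq> cyclic_closure (bshift w) h"
    using cyclic by (auto simp: cyclic_op_def cyclic_vector_iff_cyclic_closure)
  have near: "\<exists>d. cmod (basis_vec (fst r) (snd r) p - d * h p) < 1/2
              \<and> cmod (basis_vec (fst r) (snd r) q - d * h q) < 1/2" for r
  proof -
    have "basis_vec (fst r) (snd r) \<in> cyclic_closure (bshift w) h" using h(2) by auto
    then obtain d where "\<And>p. w p = 0 \<Longrightarrow> cmod (basis_vec (fst r) (snd r) p - d * h p) < 1/2"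
      using cyclic_closure_at_zero_weights[OF M h(1) _ half_gt_zero[OF zero_less_one]] by metis
    with zeros show ?thesis by blast
  qed
  obtain d1 where d1: "cmod (1 - d1 * h p) < 1/2" "cmod (d1 * h q) < 1/2"
    using near[of p] pq by (auto simp: basis_vec_def)
  obtain d2 where d2: "cmod (d2 * h p) < 1/2" "cmod (1 - d2 * h q) < 1/2"
    using near[of q] pq by (auto simp: basis_vec_def)
  have "1/2 < cmod (d1 * h p)" "1/2 < cmod (d2 * h q)"
    using d1(1) d2(2) norm_triangle_ineq2[of 1 "d1 * h p"] norm_triangle_ineq2[of 1 "d2 * h q"]
    by auto
  then have "1/2 * (1/2) < cmod (d1 * h p) * cmod (d2 * h q)"
    by (intro mult_strict_mono) auto
  moreover have "cmod (d1 * h q) * cmod (d2 * h p) < 1/2 * (1/2)"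
    using d1(2) d2(1) by (intro mult_strict_mono') auto
  moreover have "cmod (d1 * h p) * cmod (d2 * h q) = cmod (d1 * h q) * cmod (d2 * h p)"
    by (simp add: norm_mult)
  ultimately show False by linarith
qed

section \<open>An explicit cyclic vector\<close>

lemma sum_vanishing_off_range:
  assumes "finite G" "inj q" "\<And>p. p \<notin> range q \<Longrightarrow> f p = 0"
  shows "(\<Sum>p\<in>G. f p) = (\<Sum>m\<in>q -` G. f (q m))"
proof -
  have "(\<Sum>p\<in>G. f p) = (\<Sum>p\<in>q ` (q -` G). f p)"
    by (rule sum.mono_neutral_right) (use assms(1,3) in auto)
  also have "\<dots> = (\<Sum>m\<in>q -` G. f (q m))"
    using sum.reindex[of q "q -` G" f] assms(2) by (simp add: inj_on_def inj_def)
  finally show ?thesis .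
qed

definition spikes :: "(nat \<Rightarrow> 'j \<times> nat) \<Rightarrow> (nat \<Rightarrow> complex) \<Rightarrow> 'j \<times> nat \<Rightarrow> complex" where
  "spikes q a p = (if p \<in> range q then a (inv q p) else 0)"

lemma spikes_at: "inj q \<Longrightarrow> spikes q a (q m) = a m"
  by (simp add: spikes_def)

lemma spikes_eq_0: "p \<notin> range q \<Longrightarrow> spikes q a p = 0"
  by (simp add: spikes_def)

lemma sum_spikes:
  assumes "finite G" "inj q"
  shows "(\<Sum>p\<in>G. (cmod (spikes q a p))\<^sup>2) = (\<Sum>m\<in>q -` G. (cmod (a m))\<^sup>2)"
  by (subst sum_vanishing_off_range[OF assms]) (simp_all add: spikes_eq_0 spikes_at[OF assms(2)])

lemma ell2_spikes:
  fixes q :: "nat \<Rightarrow> 'j \<times> nat"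
  assumes "inj q" "summable (\<lambda>m. (cmod (a m))\<^sup>2)"
  shows "spikes q a \<in> ell2"
proof (rule ell2_if_finite_sums_bounded)
  fix G :: "('j \<times> nat) set" assume "finite G"
  with assms show "(\<Sum>p\<in>G. (cmod (spikes q a p))\<^sup>2) \<le> (\<Sum>m. (cmod (a m))\<^sup>2)"
    by (simp add: sum_spikes sum_le_suminf finite_vimageI)
qed

lemma half_power_squared: "((1/2 :: real) ^ n)\<^sup>2 = (1/4) ^ n"
  by (simp add: power2_eq_square flip: power_mult_distrib)

lemma sum_quarter_powers_le: "finite S \<Longrightarrow> (\<Sum>i\<in>S. (1/4 :: real) ^ i) \<le> 4/3"
  using sum_le_suminf[of "\<lambda>i. (1/4 :: real) ^ i" S] by (simp add: summable_geometric suminf_geometric)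

text \<open>The cyclic vector is \<open>seed = \<Sum>\<^sub>m amp m \<cdot> e\<^bsub>node m\<^esub>\<close>.
  \<open>floor_below m\<close> bounds the weight products from height \<open>K\<close> up to \<open>node m\<close>, which
  are divided out when \<open>e\<^bsub>column_of m, k\<^esub>\<close> is isolated; \<open>floor_above m\<close> bounds those of
  length at most \<open>m\<close> starting at \<open>node m\<close>, which are divided out when \<open>seed\<close> is pulled back
  through \<open>B\<^sup>n\<close>. \<open>ratio\<close> makes \<open>amp\<close> decay fast against both.\<close>

locale cyclic_construction =
  fixes w :: "'j::countable \<times> nat \<Rightarrow> complex" and M :: real and K :: nat
  assumes bounded: "\<forall>p. cmod (w p) \<le> M" and M_ge_1: "M \<ge> 1"
    and nonzero_above: "\<And>j i. K \<le> i \<Longrightarrow> w (j, i) \<noteq> 0"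
begin

definition column_of :: "nat \<Rightarrow> 'j" where "column_of m = from_nat (fst (prod_decode m))"
definition height :: "nat \<Rightarrow> nat" where "height m = m * m + K"
definition node :: "nat \<Rightarrow> 'j \<times> nat" where "node m = (column_of m, height m)"

definition floor_below :: "nat \<Rightarrow> real" where
  "floor_below m = weight_floor w (column_of m) K (height m)"
definition floor_above :: "nat \<Rightarrow> real" where
  "floor_above m = weight_floor w (column_of m) (height m) (height m + m)"

definition ratio :: "nat \<Rightarrow> real" where
  "ratio m = min (1/2) (min (floor_below m / (2 ^ (m + 2) * M ^ height m * (m + 1)))
                           (floor_above (Suc m) / 2 ^ Suc m))"

primrec amp :: "nat \<Rightarrow> real" where
  "amp 0 = 1"
| "amp (Suc m) = amp m * ratio m"

definition seed :: "'j \<times> nat \<Rightarrow> complex" where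
  "seed = spikes node (\<lambda>m. complex_of_real (amp m))"

lemma column_of_infinitely_often: "\<exists>m\<ge>t. column_of m = j"
  by (rule exI[of _ "prod_encode (to_nat j, t)"]) (simp add: column_of_def le_prod_encode_2)

lemma height_gap:
  assumes "m' < m" "k < m"
  shows "height m' + k < height m"
proof -
  obtain u where u: "m = Suc u" using assms by (cases m) auto
  have "m' * m' \<le> u * u" "k \<le> u" using assms u by (auto intro: mult_le_mono)
  then show ?thesis using u by (simp add: height_def)
qed

lemma inj_node: "inj node"
proof (rule injI)
  fix m m' assume "node m = node m'"
  then have "height m = height m'" by (simp add: node_def)
  moreover have square_less: "a * a < b * b" if "a < b" for a b :: nat
    using that by (intro mult_strict_mono') auto
  ultimately show "m = m'"
    by (cases m m' rule: linorder_cases) (auto simp: height_def dest: square_less)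
qed

lemma floor_below_pos: "floor_below m > 0"
  unfolding floor_below_def by (rule weight_floor_pos) (use nonzero_above in auto)

lemma floor_above_pos: "floor_above m > 0"
  unfolding floor_above_def by (rule weight_floor_pos) (use nonzero_above in \<open>auto simp: height_def\<close>)

lemma ratio_pos: "ratio m > 0"
  using floor_below_pos[of m] floor_above_pos[of "Suc m"] M_ge_1 by (simp add: ratio_def)

lemma amp_pos: "amp m > 0"
  by (induction m) (simp_all add: ratio_pos)

lemma amp_Suc_le_half: "amp (Suc m) \<le> amp m / 2"
  using amp_pos[of m] by (simp add: ratio_def mult_left_mono)

lemma amp_le_power: "amp m \<le> (1/2) ^ m"
  by (induction m) (use amp_Suc_le_half in \<open>auto intro: order_trans\<close>)

lemma amp_le_1: "amp m \<le> 1"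
  using amp_le_power[of m] power_le_one[of "1/2 :: real" m] by linarith

lemma amp_le_floor_above: "amp m \<le> floor_above m / 2 ^ m"
proof (cases m)
  case 0
  then show ?thesis by (simp add: floor_above_def weight_floor_def)
next
  case (Suc m')
  have "amp m' * ratio m' \<le> 1 * (floor_above m / 2 ^ m)"
    using amp_le_1[of m'] amp_pos[of m'] ratio_pos[of m'] Suc
    by (intro mult_mono) (auto simp: ratio_def)
  then show ?thesis by (simp add: Suc)
qed

lemma amp_Suc_le_floor_below:
  "amp (Suc m) \<le> amp m * (floor_below m / (2 ^ (m + 2) * M ^ height m * (m + 1)))"
proof -
  have "ratio m \<le> floor_below m / (2 ^ (m + 2) * M ^ height m * (m + 1))"
    unfolding ratio_def by (intro min.coboundedI2 min.cobounded1)
  from mult_left_mono[OF this] show ?thesis using amp_pos[of m] by simp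
qed

lemma amp_le_amp_Suc_power: "amp (Suc m + d) \<le> amp (Suc m) * (1/2) ^ d"
proof (induction d)
  case (Suc d)
  then show ?case using amp_Suc_le_half[of "Suc m + d"] by simp
qed simp

lemma amp_tail_sum:
  assumes "finite S" "\<And>m'. m' \<in> S \<Longrightarrow> m < m'"
  shows "(\<Sum>m'\<in>S. (amp m')\<^sup>2) \<le> 2 * (amp (Suc m))\<^sup>2"
proof -
  let ?d = "\<lambda>m'. m' - Suc m"
  have "(amp m')\<^sup>2 \<le> (amp (Suc m))\<^sup>2 * (1/4) ^ ?d m'" if "m' \<in> S" for m'
  proof -
    have "amp m' \<le> amp (Suc m) * (1/2) ^ ?d m'"
      using amp_le_amp_Suc_power[of m "?d m'"] assms(2)[OF that] by simp
    then have "(amp m')\<^sup>2 \<le> (amp (Suc m) * (1/2) ^ ?d m')\<^sup>2"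
      using amp_pos[of m'] by (intro power_mono) auto
    then show ?thesis by (simp only: power_mult_distrib half_power_squared)
  qed
  then have "(\<Sum>m'\<in>S. (amp m')\<^sup>2) \<le> (amp (Suc m))\<^sup>2 * (\<Sum>m'\<in>S. (1/4) ^ ?d m')"
    by (simp add: sum_distrib_left sum_mono)
  also have "(\<Sum>m'\<in>S. (1/4 :: real) ^ ?d m') = (\<Sum>i\<in>?d ` S. (1/4) ^ i)"
    using assms(2) by (subst sum.reindex) (auto simp: inj_on_def dest!: assms(2))
  also have "(amp (Suc m))\<^sup>2 * \<dots> \<le> (amp (Suc m))\<^sup>2 * (4/3)"
    using assms(1) by (intro mult_left_mono sum_quarter_powers_le) auto
  also have "\<dots> \<le> 2 * (amp (Suc m))\<^sup>2"
    by simp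
  finally show ?thesis .
qed

lemma seed_node: "seed (node m) = amp m"
  by (simp add: seed_def spikes_at[OF inj_node])

lemma seed_eq_0: "p \<notin> range node \<Longrightarrow> seed p = 0"
  by (simp add: seed_def spikes_eq_0)

lemma seed_ell2: "seed \<in> ell2"
  unfolding seed_def
proof (rule ell2_spikes[OF inj_node])
  have "(amp m)\<^sup>2 \<le> (1/4) ^ m" for m
    using power_mono[OF amp_le_power[of m], of 2] amp_pos[of m] by (simp add: half_power_squared)
  then show "summable (\<lambda>m. (cmod (complex_of_real (amp m)))\<^sup>2)"
    using amp_pos by (intro summable_comparison_test[OF _ summable_geometric[of "1/4"]]) auto
qed

lemma seed_in_op_range: "seed \<in> op_range (bshift w ^^ n)"
proof -
  define lift where "lift m = (column_of m, height m + n)" for m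
  define a where "a m = complex_of_real (amp m) / weight_prod w (column_of m) (height m) n" for m
  have inj_lift: "inj lift"
    using inj_node by (auto simp: inj_def lift_def node_def)
  have "(cmod (a m))\<^sup>2 \<le> (1/4) ^ m" if "n \<le> m" for m
  proof -
    have floor: "floor_above m \<le> cmod (weight_prod w (column_of m) (height m) n)"
      unfolding floor_above_def using that by (intro weight_floor_le_weight_prod) auto
    then have W: "cmod (weight_prod w (column_of m) (height m) n) > 0"
      using floor_above_pos[of m] by linarith
    have "amp m \<le> cmod (weight_prod w (column_of m) (height m) n) / 2 ^ m"
      using amp_le_floor_above[of m] divide_right_mono[OF floor, of "2 ^ m"] by simp
    then have "cmod (a m) \<le> (1/2) ^ m"
      using W amp_pos[of m] by (simp add: a_def norm_divide divide_le_eq power_divide mult.commute)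
    from power_mono[OF this, of 2] show ?thesis by (simp add: half_power_squared)
  qed
  then have "summable (\<lambda>m. (cmod (a m))\<^sup>2)"
    by (intro summable_comparison_test'[OF summable_geometric[of "1/4"], where N = n]) auto
  with inj_lift have "spikes lift a \<in> ell2" by (rule ell2_spikes)
  moreover have "(bshift w ^^ n) (spikes lift a) = seed"
  proof
    fix p :: "'j \<times> nat"
    obtain j k where p: "p = (j, k)" by fastforce
    show "(bshift w ^^ n) (spikes lift a) p = seed p"
    proof (cases "p \<in> range node")
      case True
      then obtain m where m: "p = node m" by blast
      have "weight_prod w j k n \<noteq> 0"
        using m p nonzero_above by (intro weight_prod_nonzero) (auto simp: node_def height_def)
      moreover have "(j, k + n) = lift m" using m p by (simp add: node_def lift_def)
      ultimately show ?thesis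
        using m p seed_node[of m] by (simp add: bshift_power spikes_at[OF inj_lift] a_def node_def)
    next
      case False
      then have "(j, k + n) \<notin> range lift" using p by (auto simp: lift_def node_def)
      with False show ?thesis by (simp add: p bshift_power spikes_eq_0 seed_eq_0)
    qed
  qed
  ultimately show ?thesis unfolding op_range_def by (metis image_eqI)
qed

lemma le_height: "k < m \<Longrightarrow> k \<le> height m"
  unfolding height_def using le_square[of m] by linarith

lemma shifted_node_beyond:
  assumes "k < m" "node m' = (j', k' + (height m - k))" "(j', k') \<noteq> (column_of m, k)"
  shows "m < m'"
proof (rule ccontr)
  assume "\<not> m < m'"
  then consider "m' = m" | "m' < m" by linarith
  then show False
  proof cases
    case 1
    then show False using assms le_height[OF assms(1)] by (auto simp: node_def)
  next
    case 2
    then show False using height_gap[OF 2 assms(1)] assms(2) by (simp add: node_def)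
  qed
qed

lemma spike_scaling_le:
  assumes "K \<le> k" "k < m"
  defines "s \<equiv> height m - k"
  shows "M ^ s * amp (Suc m) / (amp m * cmod (weight_prod w (column_of m) k s))
    \<le> 1 / (4 * real (m + 1))"
proof -
  let ?W = "cmod (weight_prod w (column_of m) k s)" and ?D = "2 ^ (m + 2) * M ^ height m * (m + 1)"
  have floor_le_W: "floor_below m \<le> ?W"
    unfolding floor_below_def s_def
    using assms(1) le_height[OF assms(2)] by (intro weight_floor_le_weight_prod) auto
  have pos: "floor_below m > 0" "amp m > 0" "M ^ height m > 0"
    using floor_below_pos amp_pos M_ge_1 by auto
  have "M ^ s \<le> M ^ height m"
    using M_ge_1 by (intro power_increasing) (auto simp: s_def)
  then have "M ^ s * amp (Suc m) \<le> M ^ height m * (amp m * (floor_below m / ?D))"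
    using amp_Suc_le_floor_below[of m] amp_pos[of "Suc m"] pos(3) by (intro mult_mono) auto
  then have "M ^ s * amp (Suc m) / (amp m * ?W)
      \<le> M ^ height m * (amp m * (floor_below m / ?D)) / (amp m * floor_below m)"
    using pos floor_le_W by (intro frac_le mult_left_mono) auto
  also have "\<dots> = 1 / (2 ^ (m + 2) * real (m + 1))"
  proof -
    have cancel: "A * (a * (f / (Z * A * N))) / (a * f) = 1 / (Z * N)"
      if "a > 0" "f > 0" "A > 0" "Z > 0" "N > 0" for a f A Z N :: real
      using that by (simp add: field_simps)
    show ?thesis using pos by (intro cancel) auto
  qed
  also have "\<dots> \<le> 1 / (4 * real (m + 1))"
    by (intro divide_left_mono mult_right_mono) (auto simp: power_add)
  finally show ?thesis .
qed

lemma spike_scaling_squared_le: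
  assumes "K \<le> k" "k < m"
  defines "s \<equiv> height m - k"
  shows "2 * (M ^ s * amp (Suc m) / (amp m * cmod (weight_prod w (column_of m) k s)))\<^sup>2
    \<le> (1 / real (m + 1))\<^sup>2"
proof -
  have "2 * (M ^ s * amp (Suc m) / (amp m * cmod (weight_prod w (column_of m) k s)))\<^sup>2
      \<le> 2 * (1 / (4 * real (m + 1)))\<^sup>2"
  proof (intro mult_left_mono power_mono)
    show "0 \<le> M ^ s * amp (Suc m) / (amp m * cmod (weight_prod w (column_of m) k s))"
      using amp_pos[of m] amp_pos[of "Suc m"] M_ge_1
      by (intro divide_nonneg_nonneg mult_nonneg_nonneg zero_le_power) auto
  qed (use spike_scaling_le[OF assms(1,2)] in \<open>simp_all add: s_def\<close>)
  also have "\<dots> \<le> (1 / real (m + 1))\<^sup>2"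
  proof -
    have "2 * (1 / (4 * x))\<^sup>2 \<le> (1 / x)\<^sup>2" if "x > 0" for x :: real
      using that by (simp add: power2_eq_square field_simps)
    then show ?thesis by (metis of_nat_0_less_iff zero_less_Suc Suc_eq_plus1)
  qed
  finally show ?thesis .
qed

lemma seed_tail_sum:
  assumes "finite G" "k < m"
  defines "s \<equiv> height m - k"
  shows "(\<Sum>p\<in>G - {(column_of m, k)}. (cmod (seed (fst p, snd p + s)))\<^sup>2) \<le> 2 * (amp (Suc m))\<^sup>2"
proof -
  define \<sigma> where "\<sigma> p = (fst p, snd p + s)" for p :: "'j \<times> nat"
  let ?G = "G - {(column_of m, k)}"
  have "inj \<sigma>" by (auto simp: inj_def \<sigma>_def prod_eq_iff)
  then have "(\<Sum>p\<in>?G. (cmod (seed (\<sigma> p)))\<^sup>2) = (\<Sum>p\<in>\<sigma> ` ?G. (cmod (seed p))\<^sup>2)"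
    by (simp add: sum.reindex inj_on_subset)
  also have "\<dots> = (\<Sum>m'\<in>node -` \<sigma> ` ?G. (amp m')\<^sup>2)"
    unfolding seed_def using assms(1) by (simp add: sum_spikes[OF _ inj_node])
  also have "\<dots> \<le> 2 * (amp (Suc m))\<^sup>2"
  proof (rule amp_tail_sum)
    show "finite (node -` \<sigma> ` ?G)"
      using assms(1) inj_node by (auto intro: finite_vimageI)
    show "m < m'" if "m' \<in> node -` \<sigma> ` ?G" for m'
      using that assms(2) by (auto simp: \<sigma>_def s_def intro: shifted_node_beyond)
  qed
  finally show ?thesis by (simp add: \<sigma>_def)
qed

lemma bshift_power_seed_add:
  assumes "\<And>j k. K \<le> k \<Longrightarrow> r (j, k) = 0" "K \<le> s"
  shows "(bshift w ^^ s) (\<lambda>p. seed p + r p) (j, k) = weight_prod w j k s * seed (j, k + s)"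
  using assms(1)[of "k + s" j] assms(2) by (simp add: bshift_power)

lemma spike_error_le:
  assumes r: "\<And>j k. K \<le> k \<Longrightarrow> r (j, k) = 0" and k: "K \<le> k" "k < m"
  defines "s \<equiv> height m - k"
  defines "c \<equiv> 1 / (complex_of_real (amp m) * weight_prod w (column_of m) k s)"
  shows "l2norm (\<lambda>p. basis_vec (column_of m) k p - c * (bshift w ^^ s) (\<lambda>p. seed p + r p) p)
    \<le> 1 / real (m + 1)"
proof -
  let ?j = "column_of m" and ?W = "weight_prod w (column_of m) k s"
  define D where "D = (\<lambda>p. basis_vec ?j k p - c * (bshift w ^^ s) (\<lambda>p. seed p + r p) p)"
  have ks: "k + s = height m" using le_height[OF k(2)] by (simp add: s_def)
  have "K \<le> s" unfolding s_def height_def using k(2) le_square[of m] by linarith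
  note shift = bshift_power_seed_add[where r = r, OF r this]
  have W: "?W \<noteq> 0" using nonzero_above k(1) by (intro weight_prod_nonzero) auto
  have D_at: "D (?j, k) = 0"
    using seed_node[of m] W amp_pos[of m] ks
    by (simp add: D_def shift c_def basis_vec_def node_def)
  have D_off: "(cmod (D p))\<^sup>2 \<le> (cmod c * M ^ s)\<^sup>2 * (cmod (seed (fst p, snd p + s)))\<^sup>2"
    if "p \<noteq> (?j, k)" for p
  proof -
    obtain j' k' where p: "p = (j', k')" by fastforce
    have "cmod (D p) = cmod c * cmod (weight_prod w j' k' s) * cmod (seed (j', k' + s))"
      using that by (auto simp: p D_def shift basis_vec_def norm_mult)
    also have "\<dots> \<le> cmod c * M ^ s * cmod (seed (j', k' + s))"
      by (intro mult_right_mono mult_left_mono cmod_weight_prod_le bounded) auto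
    finally show ?thesis by (simp add: p power_mono power_mult_distrib[symmetric])
  qed
  have "(\<Sum>p\<in>G. (cmod (D p))\<^sup>2) \<le> (1 / real (m + 1))\<^sup>2" if G: "finite G" for G
  proof -
    have "(\<Sum>p\<in>G. (cmod (D p))\<^sup>2) = (\<Sum>p\<in>G - {(?j, k)}. (cmod (D p))\<^sup>2)"
      by (rule sum.mono_neutral_right) (use G D_at in auto)
    also have "\<dots> \<le> (cmod c * M ^ s)\<^sup>2 * (\<Sum>p\<in>G - {(?j, k)}. (cmod (seed (fst p, snd p + s)))\<^sup>2)"
      unfolding sum_distrib_left using D_off by (intro sum_mono) auto
    also have "\<dots> \<le> (cmod c * M ^ s)\<^sup>2 * (2 * (amp (Suc m))\<^sup>2)"
      using seed_tail_sum[OF G k(2)] by (intro mult_left_mono) (auto simp: s_def)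
    also have "\<dots> = 2 * (M ^ s * amp (Suc m) / (amp m * cmod ?W))\<^sup>2"
      using amp_pos[of m] by (simp add: c_def norm_divide norm_mult power_mult_distrib power_divide)
    also have "\<dots> \<le> (1 / real (m + 1))\<^sup>2"
      using spike_scaling_squared_le[OF k] by (simp add: s_def)
    finally show ?thesis .
  qed
  moreover have "1 / real (m + 1) \<ge> 0" by simp
  ultimately have "l2norm D \<le> 1 / real (m + 1)"
    by (rule ell2_l2norm_leI(2))
  then show ?thesis by (simp add: D_def)
qed

lemma basis_vec_in_cyclic_closure:
  assumes r: "\<And>j k. K \<le> k \<Longrightarrow> r (j, k) = 0" and k: "K \<le> k"
  shows "basis_vec j k \<in> cyclic_closure (bshift w) (\<lambda>p. seed p + r p)"
proof -
  let ?h = "\<lambda>p. seed p + r p"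
  have "\<exists>y\<in>orbit_span (bshift w) ?h. l2norm (\<lambda>p. basis_vec j k p - y p) < \<epsilon>" if "\<epsilon> > 0" for \<epsilon>
  proof -
    obtain t :: nat where t: "t > 0" "inverse (real t) < \<epsilon>"
      using ex_inverse_of_nat_less[OF \<open>\<epsilon> > 0\<close>] by blast
    obtain m where m: "m \<ge> max t (Suc k)" "column_of m = j"
      using column_of_infinitely_often by blast
    define s where "s = height m - k"
    define c where "c = 1 / (complex_of_real (amp m) * weight_prod w (column_of m) k s)"
    have "k < m" using m(1) by simp
    then have "l2norm (\<lambda>p. basis_vec (column_of m) k p - c * (bshift w ^^ s) ?h p) \<le> 1 / real (m + 1)"
      using spike_error_le[where r = r, OF r k] unfolding s_def c_def by blast
    also have "1 / real (m + 1) \<le> inverse (real t)"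
      using t(1) m(1) by (simp add: inverse_eq_divide frac_le)
    also have "\<dots> < \<epsilon>" by (rule t(2))
    finally show ?thesis
      unfolding m(2)
      using orbit_span_scale[OF orbit_span_power, of c] by (rule bexI)
  qed
  then show ?thesis by (simp add: cyclic_closure_def)
qed

lemma perturbation_in_cyclic_closure:
  assumes r: "r \<in> ell2" "\<And>j k. K \<le> k \<Longrightarrow> r (j, k) = 0"
  shows "r \<in> cyclic_closure (bshift w) (\<lambda>p. seed p + r p)"
proof -
  interpret bounded_l2_operator "bshift w" M
    by (rule bshift_bounded_l2_operator[OF bounded])
  let ?h = "\<lambda>p. seed p + r p"
  have h: "?h \<in> ell2" by (intro ell2_add seed_ell2 r(1))
  have "seed \<in> cyclic_closure (bshift w) ?h"
  proof (rule cyclic_closure_if_basis_vecs[OF h seed_ell2])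
    fix j k assume "seed (j, k) \<noteq> 0"
    then have "(j, k) \<in> range node" using seed_eq_0 by blast
    then show "basis_vec j k \<in> cyclic_closure (bshift w) ?h"
      by (auto simp: node_def height_def intro: basis_vec_in_cyclic_closure[where r = r, OF r(2)])
  qed
  moreover have "?h \<in> cyclic_closure (bshift w) ?h"
    using orbit_span_power[of 0] orbit_span_subset_cyclic_closure[OF h] by auto
  ultimately show ?thesis
    using cyclic_closure_diff[OF h] by fastforce
qed

end

lemma bounded_by_max_1: "\<forall>p. cmod (w p) \<le> M \<Longrightarrow> \<forall>p. cmod (w p) \<le> max M 1"
  by (auto intro: le_max_iff_disj[THEN iffD2])

theorem cyclic_vector_in_op_ranges_if_nonzero_weights:
  fixes w :: "'j::countable \<times> nat \<Rightarrow> complex"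
  assumes M: "\<forall>p. cmod (w p) \<le> M" and nonzero: "\<forall>p. w p \<noteq> 0"
  shows "\<exists>h\<in>(\<Inter>n\<in>{1..}. op_range (bshift w ^^ n)). cyclic_vector (bshift w) h"
proof -
  interpret cyclic_construction w "max M 1" 0
    using bounded_by_max_1[OF M] nonzero by unfold_locales auto
  interpret bounded_l2_operator "bshift w" "max M 1"
    by (rule bshift_bounded_l2_operator[OF bounded])
  have "cyclic_vector (bshift w) seed"
    using cyclic_vector_if_basis_vecs[OF seed_ell2] basis_vec_in_cyclic_closure[of "\<lambda>p. 0"] by simp
  then show ?thesis using seed_in_op_range by blast
qed

theorem cyclic_if_unique_zero_weight:
  fixes w :: "'j::countable \<times> nat \<Rightarrow> complex"
  assumes M: "\<forall>p. cmod (w p) \<le> M" and unique_zero: "\<And>p. w p = 0 \<longleftrightarrow> p = (j0, k0)"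
  shows "cyclic_op (bshift w)"
proof -
  interpret cyclic_construction w "max M 1" "Suc k0"
    using bounded_by_max_1[OF M] unique_zero by unfold_locales auto
  interpret bounded_l2_operator "bshift w" "max M 1"
    by (rule bshift_bounded_l2_operator[OF bounded])
  define h where "h = (\<lambda>p. seed p + basis_vec j0 k0 p)"
  have h: "h \<in> ell2" unfolding h_def by (intro ell2_add seed_ell2 basis_vec_ell2)
  have high: "basis_vec j k \<in> cyclic_closure (bshift w) h" if "Suc k0 \<le> k" for j k
    unfolding h_def using that by (intro basis_vec_in_cyclic_closure) (auto simp: basis_vec_def)
  have at_zero: "basis_vec j0 k0 \<in> cyclic_closure (bshift w) h"
    unfolding h_def by (rule perturbation_in_cyclic_closure) (simp, simp add: basis_vec_def)
  have "basis_vec j k \<in> cyclic_closure (bshift w) h" for j k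
  proof -
    consider "Suc k0 \<le> k" | "j = j0" "k \<le> k0" | "j \<noteq> j0" "k \<le> k0" by linarith
    then show ?thesis
    proof cases
      case 1
      then show ?thesis by (rule high)
    next
      case 2
      then have "basis_vec j (k + (k0 - k)) \<in> cyclic_closure (bshift w) h" using at_zero by simp
      then show ?thesis
        by (rule basis_vec_in_cyclic_closure_descend[OF bounded h])
          (rule weight_prod_nonzero, use 2 in \<open>auto dest: unique_zero[THEN iffD1]\<close>)
    next
      case 3
      then have "basis_vec j (k + (Suc k0 - k)) \<in> cyclic_closure (bshift w) h" by (simp add: high)
      then show ?thesis
        by (rule basis_vec_in_cyclic_closure_descend[OF bounded h])
          (rule weight_prod_nonzero, use 3 in \<open>auto dest: unique_zero[THEN iffD1]\<close>)
    qed
  qed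
  then show ?thesis using cyclic_vector_if_basis_vecs[OF h] by (auto simp: cyclic_op_def)
qed

text \<open>The construction gives a cyclic vector in the ranges of all powers of \<open>B\<close> as soon as
  no weight vanishes.\<close>

theorem mainTheorem16:
  fixes w :: "'j::countable \<times> nat \<Rightarrow> complex"
  assumes bounded: "\<exists>M. \<forall>p. cmod (w p) \<le> M"
  shows "((\<forall>p. w p \<noteq> 0) \<longrightarrow> cyclic_op (bshift w))
    \<and> (((\<forall>p. w p \<noteq> 0) \<and>
         (\<exists>g \<in> (\<Inter>n\<in>{1..}. op_range (bshift w ^^ n)).
            \<forall>j. infinite {k. l2inner g (basis_vec j k) \<noteq> 0}))
        \<longrightarrow> (\<exists>h \<in> (\<Inter>n\<in>{1..}. op_range (bshift w ^^ n)). cyclic_vector (bshift w) h))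
    \<and> (cyclic_op (bshift w) \<longleftrightarrow> (\<forall>p q. w p = 0 \<and> w q = 0 \<longrightarrow> p = q))"
proof -
  obtain M where M: "\<forall>p. cmod (w p) \<le> M" using bounded by blast
  have ranges: "(\<forall>p. w p \<noteq> 0) \<longrightarrow>
      (\<exists>h\<in>(\<Inter>n\<in>{1..}. op_range (bshift w ^^ n)). cyclic_vector (bshift w) h)"
    using cyclic_vector_in_op_ranges_if_nonzero_weights[OF M] by blast
  moreover have "cyclic_op (bshift w) \<longleftrightarrow> (\<forall>p q. w p = 0 \<and> w q = 0 \<longrightarrow> p = q)"
  proof
    show "\<forall>p q. w p = 0 \<and> w q = 0 \<longrightarrow> p = q" if "cyclic_op (bshift w)"
      using at_most_one_zero_weight_if_cyclic[OF M that] by blast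
    assume unique: "\<forall>p q. w p = 0 \<and> w q = 0 \<longrightarrow> p = q"
    show "cyclic_op (bshift w)"
    proof (cases "\<exists>p. w p = 0")
      case True
      then obtain j0 k0 where "w (j0, k0) = 0" by auto
      with unique have "\<And>p. w p = 0 \<longleftrightarrow> p = (j0, k0)" by blast
      then show ?thesis by (rule cyclic_if_unique_zero_weight[OF M])
    next
      case False
      then show ?thesis using ranges by (auto simp: cyclic_op_def)
    qed
  qed
  ultimately show ?thesis by (auto simp: cyclic_op_def)
qed

end
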